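(* Let $G=(V,E)$ be an $S$-regular graph with cells $V_1,\dots,V_k$, $n_i=|V_i|$, and let $B,C\subseteq V$, with $B_i=B\cap V_i$, $C_j=C\cap V_j$. Then \[\Bigl|\,|E(B,C)|-\sum_{i=1}^k\sum_{j=1}^k\sqrt{\tfrac{s_{ij}s_{ji}}{n_in_j}}\,|B_i||C_j|\,\Bigr|\le\lambda_B\sqrt{|B||C|}.\]
   Context: All graphs are simple, undirected and connected. $G$ is $S$-regular ($S=(s_{ij})$ a $k\times k$ nonnegative integer matrix) if $V$ is partitioned into nonempty cells $V_1,\dots,V_k$ such that every vertex of $V_i$ has exactly $s_{ij}$ neighbours in $V_j$. $|E(B,C)|$ denotes the number of pairs $(u,v)\in B\times C$ with $uv\in E$ (i.e. $\mathbf{1}_B^TA\mathbf{1}_C$, $A$ the adjacency matrix). The subspace $W=\mathrm{span}\{\mathbf{1}_{V_1},\dots,\mathbf{1}_{V_k}\}$ is $A$-invariant with eigenvalues on $W$ equal to those of $S$; the eigenvalues of $A$ on $W^\perp$ are the bulk eigenvalues (assume $|V|>k$), and $\lambda_B$ is the largest absolute value of a bulk eigenvalue. *)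

theory Defs
  imports "HOL-Analysis.Analysis"
begin

definition simple_graph :: "'a set \<Rightarrow> ('a \<Rightarrow> 'a \<Rightarrow> bool) \<Rightarrow> bool" where
  "simple_graph V E \<longleftrightarrow> finite V \<and> V \<noteq> {} \<and>
     (\<forall>u v. E u v \<longrightarrow> u \<in> V \<and> v \<in> V) \<and>
     (\<forall>u v. E u v \<longrightarrow> E v u) \<and> (\<forall>u. \<not> E u u)"

definition connected_graph :: "'a set \<Rightarrow> ('a \<Rightarrow> 'a \<Rightarrow> bool) \<Rightarrow> bool" where
  "connected_graph V E \<longleftrightarrow> (\<forall>u\<in>V. \<forall>v\<in>V. E\<^sup>*\<^sup>* u v)"

definition is_partition :: "'a set \<Rightarrow> nat \<Rightarrow> (nat \<Rightarrow> 'a set) \<Rightarrow> bool" where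
  "is_partition V k P \<longleftrightarrow> (\<forall>i<k. P i \<noteq> {}) \<and> (\<forall>i<k. \<forall>j<k. i \<noteq> j \<longrightarrow> P i \<inter> P j = {})
     \<and> (\<Union>i<k. P i) = V"

definition S_regular :: "'a set \<Rightarrow> ('a \<Rightarrow> 'a \<Rightarrow> bool) \<Rightarrow> nat \<Rightarrow> (nat \<Rightarrow> 'a set) \<Rightarrow> (nat \<Rightarrow> nat \<Rightarrow> nat) \<Rightarrow> bool" where
  "S_regular V E k P s \<longleftrightarrow> is_partition V k P \<and>
     (\<forall>i<k. \<forall>j<k. \<forall>v\<in>P i. card {u \<in> P j. E v u} = s i j)"

definition adj_apply :: "'a set \<Rightarrow> ('a \<Rightarrow> 'a \<Rightarrow> bool) \<Rightarrow> ('a \<Rightarrow> real) \<Rightarrow> 'a \<Rightarrow> real" where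
  "adj_apply V E x v = (\<Sum>u\<in>V. if E v u then x u else 0)"

text \<open>Bulk eigenvalues: eigenvalues of A on the orthogonal complement of
  W = span of the cell indicator vectors.\<close>
definition bulk_eigenvalues :: "'a set \<Rightarrow> ('a \<Rightarrow> 'a \<Rightarrow> bool) \<Rightarrow> nat \<Rightarrow> (nat \<Rightarrow> 'a set) \<Rightarrow> real set" where
  "bulk_eigenvalues V E k P = {\<mu>. \<exists>x :: 'a \<Rightarrow> real.
      (\<forall>v. v \<notin> V \<longrightarrow> x v = 0) \<and> (\<exists>v\<in>V. x v \<noteq> 0) \<and>
      (\<forall>i<k. (\<Sum>v\<in>P i. x v) = 0) \<and>
      (\<forall>v\<in>V. adj_apply V E x v = \<mu> * x v)}"

definition lambda_B :: "'a set \<Rightarrow> ('a \<Rightarrow> 'a \<Rightarrow> bool) \<Rightarrow> nat \<Rightarrow> (nat \<Rightarrow> 'a set) \<Rightarrow> real" where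
  "lambda_B V E k P = Max (abs ` bulk_eigenvalues V E k P)"

definition edges_between :: "('a \<Rightarrow> 'a \<Rightarrow> bool) \<Rightarrow> 'a set \<Rightarrow> 'a set \<Rightarrow> nat" where
  "edges_between E B C = card {(u, v). u \<in> B \<and> v \<in> C \<and> E u v}"

end

theory Submission
  imports Defs
begin

text \<open>
  Write the indicator of B as its orthogonal projection onto the span W of the cell indicators,
  which is |B_i|/n_i on V_i, plus a remainder in W-perp, and likewise for C. As A is symmetric
  and maps W-perp into itself, the edge count <1_B, A 1_C> is <1_B, A (proj C)> plus
  <rem B, A (rem C)>. Counting the edges between two cells from both sides gives
  n_i s_ij = n_j s_ji, which turns the first term into the double sum of the statement; the
  second is at most lambda_B |rem B| |rem C| <= lambda_B sqrt (|B| |C|).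

  The spectral bound on W-perp avoids the spectral theorem: by compactness some unit vector x
  of W-perp maximises |Ax|, and then A (A x) = |Ax|^2 x, so either Ax + |Ax| x is an
  eigenvector for |Ax| or it vanishes and x is an eigenvector for -|Ax|.
\<close>

definition inner_on :: "'a set \<Rightarrow> ('a \<Rightarrow> real) \<Rightarrow> ('a \<Rightarrow> real) \<Rightarrow> real" where
  "inner_on V x y = (\<Sum>v\<in>V. x v * y v)"

lemma inner_on_commute: "inner_on V x y = inner_on V y x"
  unfolding inner_on_def by (simp add: mult.commute)

lemma inner_on_scaleL: "inner_on V (\<lambda>v. c * x v) y = c * inner_on V x y"
  unfolding inner_on_def by (simp add: sum_distrib_left mult.assoc)

lemma inner_on_scaleR: "inner_on V x (\<lambda>v. c * y v) = c * inner_on V x y"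
  unfolding inner_on_def by (simp add: sum_distrib_left mult.left_commute)

lemma inner_on_addL: "inner_on V (\<lambda>v. x v + y v) z = inner_on V x z + inner_on V y z"
  unfolding inner_on_def by (simp add: sum.distrib distrib_right)

lemma inner_on_addR: "inner_on V z (\<lambda>v. x v + y v) = inner_on V z x + inner_on V z y"
  unfolding inner_on_def by (simp add: sum.distrib distrib_left)

lemma inner_on_diffL: "inner_on V (\<lambda>v. x v - y v) z = inner_on V x z - inner_on V y z"
  unfolding inner_on_def by (simp add: sum_subtractf left_diff_distrib)

lemma inner_on_diffR: "inner_on V z (\<lambda>v. x v - y v) = inner_on V z x - inner_on V z y"
  unfolding inner_on_def by (simp add: sum_subtractf right_diff_distrib)

lemma inner_on_sumR: "inner_on V x (\<lambda>v. \<Sum>j\<in>J. y j v) = (\<Sum>j\<in>J. inner_on V x (y j))"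
  unfolding inner_on_def by (simp add: sum_distrib_left sum.swap[where A = V])

lemma inner_on_sumL: "inner_on V (\<lambda>v. \<Sum>j\<in>J. y j v) x = (\<Sum>j\<in>J. inner_on V (y j) x)"
  using inner_on_sumR[where V = V and x = x and J = J and y = y] by (simp add: inner_on_commute)

lemma inner_on_cong:
  "(\<And>v. v \<in> V \<Longrightarrow> x v = x' v) \<Longrightarrow> (\<And>v. v \<in> V \<Longrightarrow> y v = y' v) \<Longrightarrow>
    inner_on V x y = inner_on V x' y'"
  unfolding inner_on_def by (auto intro!: sum.cong)

lemma inner_on_self_nonneg: "inner_on V x x \<ge> 0"
  unfolding inner_on_def by (auto intro: sum_nonneg)

lemma inner_on_self_eq_0_iff: "finite V \<Longrightarrow> inner_on V x x = 0 \<longleftrightarrow> (\<forall>v\<in>V. x v = 0)"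
  unfolding inner_on_def by (simp add: sum_nonneg_eq_0_iff)

lemma inner_on_self_ge_square: "finite V \<Longrightarrow> v \<in> V \<Longrightarrow> x v * x v \<le> inner_on V x x"
  unfolding inner_on_def by (rule member_le_sum) auto

lemma inner_on_indicatorL:
  assumes "finite V" and "S \<subseteq> V"
  shows "inner_on V (indicator S) x = sum x S"
proof -
  have "inner_on V (indicator S) x = (\<Sum>v\<in>V. if v \<in> S then x v else 0)"
    unfolding inner_on_def by (intro sum.cong) (auto simp: indicator_def)
  also have "\<dots> = sum x S"
    using assms by (simp add: sum.If_cases Int_absorb1)
  finally show ?thesis .
qed

lemma inner_on_Cauchy_Schwarz:
  "\<bar>inner_on V x y\<bar> \<le> sqrt (inner_on V x x) * sqrt (inner_on V y y)"
proof -
  have "\<bar>inner_on V x y\<bar> \<le> (\<Sum>v\<in>V. \<bar>x v\<bar> * \<bar>y v\<bar>)"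
    unfolding inner_on_def using sum_abs[of "\<lambda>v. x v * y v" V] by (simp add: abs_mult)
  also have "\<dots> \<le> L2_set x V * L2_set y V"
    by (rule L2_set_mult_ineq)
  also have "\<dots> = sqrt (inner_on V x x) * sqrt (inner_on V y y)"
    unfolding L2_set_def inner_on_def by (simp add: power2_eq_square)
  finally show ?thesis .
qed

lemma inner_on_normalize:
  assumes "inner_on V x x > 0"
  shows "inner_on V (\<lambda>v. x v / sqrt (inner_on V x x)) (\<lambda>v. x v / sqrt (inner_on V x x)) = 1"
proof -
  have "inner_on V (\<lambda>v. x v / sqrt (inner_on V x x)) (\<lambda>v. x v / sqrt (inner_on V x x))
      = inner_on V x x / (sqrt (inner_on V x x))\<^sup>2"
    using inner_on_scaleL[of V "1 / sqrt (inner_on V x x)"] inner_on_scaleR[of V _ "1 / sqrt (inner_on V x x)"]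
    by (simp add: power2_eq_square)
  then show ?thesis
    using assms by simp
qed

lemma Bessel_inequality_on:
  assumes "finite J"
    and unit: "\<And>j. j \<in> J \<Longrightarrow> inner_on V (f j) (f j) = 1"
    and orth: "\<And>i j. i \<in> J \<Longrightarrow> j \<in> J \<Longrightarrow> i \<noteq> j \<Longrightarrow> inner_on V (f i) (f j) = 0"
  shows "(\<Sum>j\<in>J. (inner_on V y (f j))\<^sup>2) \<le> inner_on V y y"
proof -
  define c where "c j = inner_on V y (f j)" for j
  define p where "p v = (\<Sum>j\<in>J. c j * f j v)" for v
  have coeff: "inner_on V (f i) p = c i" if "i \<in> J" for i
  proof -
    have "inner_on V (f i) p = (\<Sum>j\<in>J. c j * inner_on V (f i) (f j))"
      unfolding p_def inner_on_sumR inner_on_scaleR ..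
    also have "\<dots> = (\<Sum>j\<in>J. if j = i then c i else 0)"
      using unit orth that by (intro sum.cong) auto
    finally show ?thesis
      using \<open>finite J\<close> that by simp
  qed
  have yp: "inner_on V y p = (\<Sum>j\<in>J. (c j)\<^sup>2)"
    unfolding p_def inner_on_sumR inner_on_scaleR c_def by (simp add: power2_eq_square)
  have pp: "inner_on V p p = (\<Sum>j\<in>J. (c j)\<^sup>2)"
  proof -
    have "inner_on V p p = (\<Sum>j\<in>J. c j * inner_on V (f j) p)"
      using inner_on_sumL[where V = V and J = J and y = "\<lambda>j v. c j * f j v" and x = p, folded p_def]
      by (simp add: inner_on_scaleL)
    then show ?thesis
      using coeff by (simp add: power2_eq_square)
  qed
  have "0 \<le> inner_on V (\<lambda>v. y v - p v) (\<lambda>v. y v - p v)"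
    by (rule inner_on_self_nonneg)
  also have "\<dots> = inner_on V y y - 2 * inner_on V y p + inner_on V p p"
    unfolding inner_on_diffL inner_on_diffR inner_on_commute[of V p y] by simp
  finally show ?thesis
    unfolding yp pp c_def by simp
qed

lemma card_orthonormal_le:
  assumes "finite V" and "finite J"
    and unit: "\<And>j. j \<in> J \<Longrightarrow> inner_on V (f j) (f j) = 1"
    and orth: "\<And>i j. i \<in> J \<Longrightarrow> j \<in> J \<Longrightarrow> i \<noteq> j \<Longrightarrow> inner_on V (f i) (f j) = 0"
  shows "card J \<le> card V"
proof -
  have coordinate: "(\<Sum>j\<in>J. (f j v)\<^sup>2) \<le> 1" if "v \<in> V" for v
  proof -
    have "inner_on V (indicator {v}) (f j) = f j v" for j
      using assms(1) that by (simp add: inner_on_indicatorL)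
    moreover have "inner_on V (indicator {v}) (indicator {v}) = 1"
      using assms(1) that by (simp add: inner_on_indicatorL)
    ultimately show ?thesis
      using Bessel_inequality_on[OF assms(2) unit orth, where y = "indicator {v}"] by simp
  qed
  have "real (card J) = (\<Sum>j\<in>J. inner_on V (f j) (f j))"
    using unit by simp
  also have "\<dots> = (\<Sum>v\<in>V. \<Sum>j\<in>J. (f j v)\<^sup>2)"
    unfolding inner_on_def by (subst sum.swap) (simp add: power2_eq_square)
  also have "\<dots> \<le> real (card V)"
    using sum_mono[of V "\<lambda>v. \<Sum>j\<in>J. (f j v)\<^sup>2" "\<lambda>_. 1"] coordinate by simp
  finally show ?thesis
    by simp
qed

locale S_regular_graph =
  fixes V :: "'a set" and E :: "'a \<Rightarrow> 'a \<Rightarrow> bool" and k :: nat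
    and P :: "nat \<Rightarrow> 'a set" and s :: "nat \<Rightarrow> nat \<Rightarrow> nat"
  assumes simple: "simple_graph V E" and regular: "S_regular V E k P s"
begin

abbreviation A :: "('a \<Rightarrow> real) \<Rightarrow> 'a \<Rightarrow> real" where
  "A \<equiv> adj_apply V E"

lemma finite_V: "finite V"
  using simple by (simp add: simple_graph_def)

lemma edge_in_V: "E u v \<Longrightarrow> u \<in> V \<and> v \<in> V"
  using simple by (simp add: simple_graph_def)

lemma edge_sym: "E u v \<Longrightarrow> E v u"
  using simple by (simp add: simple_graph_def)

lemma V_eq_UN_cells: "V = (\<Union>i<k. P i)"
  using regular by (simp add: S_regular_def is_partition_def)

lemma cell_subset: "i < k \<Longrightarrow> P i \<subseteq> V"
  using V_eq_UN_cells by auto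

lemma finite_cell: "i < k \<Longrightarrow> finite (P i)"
  using cell_subset finite_V finite_subset by blast

lemma card_cell_pos: "i < k \<Longrightarrow> card (P i) > 0"
  using regular finite_cell by (simp add: S_regular_def is_partition_def card_gt_0_iff)

lemma cells_disjoint: "i < k \<Longrightarrow> j < k \<Longrightarrow> i \<noteq> j \<Longrightarrow> P i \<inter> P j = {}"
  using regular by (simp add: S_regular_def is_partition_def)

lemma card_neighbours_in_cell:
  "i < k \<Longrightarrow> j < k \<Longrightarrow> v \<in> P i \<Longrightarrow> card {u \<in> P j. E v u} = s i j"
  using regular by (simp add: S_regular_def)

lemma sum_over_cells: "sum f V = (\<Sum>i<k. sum f (P i))"
  by (subst V_eq_UN_cells, rule sum.UNION_disjoint) (auto simp: finite_cell dest: cells_disjoint)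

lemma sum_if_edge: "finite S \<Longrightarrow> (\<Sum>u\<in>S. if E v u then c else 0) = c * real (card {u \<in> S. E v u})"
  by (simp add: sum.inter_filter[symmetric])

lemma adj_apply_outside: "v \<notin> V \<Longrightarrow> A x v = 0"
  unfolding adj_apply_def by (rule sum.neutral) (auto dest: edge_in_V)

lemma adj_apply_add: "A (\<lambda>u. x u + y u) v = A x v + A y v"
  unfolding adj_apply_def by (auto simp: sum.distrib[symmetric] intro!: sum.cong)

lemma adj_apply_scale: "A (\<lambda>u. c * x u) v = c * A x v"
  unfolding adj_apply_def by (auto simp: sum_distrib_left intro!: sum.cong)

lemma adj_apply_indicator:
  assumes "S \<subseteq> V"
  shows "A (indicator S) v = real (card {u \<in> S. E v u})"
proof -
  have "A (indicator S) v = (\<Sum>u\<in>V. if u \<in> S then (if E v u then 1 else 0) else 0)"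
    unfolding adj_apply_def by (intro sum.cong) auto
  also have "\<dots> = (\<Sum>u\<in>S. if E v u then 1 else 0)"
    using assms finite_V by (simp add: sum.inter_restrict[symmetric] Int_absorb1)
  finally show ?thesis
    using sum_if_edge[OF finite_subset[OF assms finite_V], of v 1] by simp
qed

lemma inner_on_adj_apply_commute: "inner_on V x (A y) = inner_on V (A x) y"
proof -
  have "inner_on V x (A y) = (\<Sum>v\<in>V. \<Sum>u\<in>V. if E v u then x v * y u else 0)"
    unfolding inner_on_def adj_apply_def by (simp add: sum_distrib_left if_distrib cong: if_cong)
  also have "\<dots> = (\<Sum>u\<in>V. \<Sum>v\<in>V. if E v u then x v * y u else 0)"
    by (rule sum.swap)
  also have "\<dots> = inner_on V (A x) y"
    unfolding inner_on_def adj_apply_def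
    by (auto simp: sum_distrib_right if_distrib dest: edge_sym intro!: sum.cong)
  finally show ?thesis .
qed

text \<open>Membership in W-perp, for vectors supported on V.\<close>
definition balanced :: "('a \<Rightarrow> real) \<Rightarrow> bool" where
  "balanced x \<longleftrightarrow> (\<forall>v. v \<notin> V \<longrightarrow> x v = 0) \<and> (\<forall>i<k. sum x (P i) = 0)"

lemma bulk_eigenvalues_iff:
  "\<mu> \<in> bulk_eigenvalues V E k P \<longleftrightarrow>
    (\<exists>x. balanced x \<and> (\<exists>v\<in>V. x v \<noteq> 0) \<and> (\<forall>v\<in>V. A x v = \<mu> * x v))"
  unfolding bulk_eigenvalues_def balanced_def by blast

lemma balanced_scale: "balanced x \<Longrightarrow> balanced (\<lambda>v. c * x v)"
  unfolding balanced_def by (simp add: sum_distrib_left[symmetric])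

lemma balanced_add: "balanced x \<Longrightarrow> balanced y \<Longrightarrow> balanced (\<lambda>v. x v + y v)"
  unfolding balanced_def by (simp add: sum.distrib)

lemma adj_apply_balanced:
  assumes "balanced x"
  shows "balanced (A x)"
proof -
  have "sum (A x) (P i) = 0" if i: "i < k" for i
  proof -
    have "sum (A x) (P i) = (\<Sum>u\<in>V. \<Sum>v\<in>P i. if E u v then x u else 0)"
      unfolding adj_apply_def by (subst sum.swap) (auto intro!: sum.cong dest: edge_sym)
    also have "\<dots> = (\<Sum>j<k. \<Sum>u\<in>P j. x u * real (card {v \<in> P i. E u v}))"
      using finite_cell[OF i] by (simp add: sum_if_edge sum_over_cells[symmetric])
    also have "\<dots> = (\<Sum>j<k. real (s j i) * sum x (P j))"
      using i by (auto simp: card_neighbours_in_cell sum_distrib_right mult.commute intro!: sum.cong)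
    also have "\<dots> = 0"
      using assms by (simp add: balanced_def)
    finally show ?thesis .
  qed
  then show ?thesis
    by (simp add: balanced_def adj_apply_outside)
qed

definition balanced_sphere :: "('a \<Rightarrow> real) set" where
  "balanced_sphere = {x. balanced x \<and> inner_on V x x = 1}"

lemma normalize_in_balanced_sphere:
  assumes "balanced x" and "\<exists>v\<in>V. x v \<noteq> 0"
  shows "(\<lambda>v. x v / sqrt (inner_on V x x)) \<in> balanced_sphere"
proof -
  have "inner_on V x x > 0"
    using assms(2) inner_on_self_eq_0_iff[OF finite_V] inner_on_self_nonneg[of V x]
    by (metis less_eq_real_def)
  then show ?thesis
    using balanced_scale[OF assms(1), of "1 / sqrt (inner_on V x x)"]
    by (simp add: balanced_sphere_def inner_on_normalize)
qed

lemma balanced_sphere_nonempty: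
  assumes "card V > k"
  shows "balanced_sphere \<noteq> {}"
proof -
  have "\<exists>i<k. \<not> card (P i) \<le> 1"
  proof (rule ccontr)
    assume "\<not> ?thesis"
    then have "card V \<le> (\<Sum>i<k. 1)"
      using card_UN_le[of "{..<k}" P] sum_mono[of "{..<k}" "\<lambda>i. card (P i)" "\<lambda>_. 1"]
      by (simp add: V_eq_UN_cells[symmetric])
    then show False
      using assms by simp
  qed
  then obtain i a b where i: "i < k" and ab: "a \<in> P i" "b \<in> P i" "a \<noteq> b"
    using finite_cell by (metis One_nat_def card_le_Suc0_iff_eq)
  define x where "x = (\<lambda>v. indicator {a} v - indicator {b} v :: real)"
  have "sum x (P j) = 0" if "j < k" for j
  proof (cases "j = i")
    case True
    then show ?thesis
      using ab finite_cell[OF i] by (simp add: x_def sum_subtractf indicator_def of_bool_def)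
  next
    case False
    then have "a \<notin> P j" "b \<notin> P j"
      using ab cells_disjoint[OF that i] by auto
    then show ?thesis
      by (intro sum.neutral) (auto simp: x_def indicator_def)
  qed
  moreover have "a \<in> V"
    using ab(1) i cell_subset by auto
  ultimately have "balanced x" and "\<exists>v\<in>V. x v \<noteq> 0"
    using ab(3) cell_subset i ab by (auto simp: balanced_def x_def indicator_def)
  then show ?thesis
    using normalize_in_balanced_sphere by blast
qed

lemma compact_balanced_sphere: "compact balanced_sphere"
proof -
  define box where "box = PiE UNIV (\<lambda>v. if v \<in> V then {-1..1::real} else {0})"
  have "compactin (product_topology (\<lambda>_. euclidean) UNIV) box"
    unfolding box_def compactin_PiE by (auto simp: compactin_euclidean_iff)
  then have "compact box"
    by (simp add: euclidean_product_topology compactin_euclidean_iff)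
  moreover have "closed balanced_sphere"
    unfolding balanced_sphere_def balanced_def inner_on_def
    by (intro closed_Collect_conj closed_Collect_all closed_Collect_imp closed_Collect_eq)
      (auto intro!: continuous_intros simp: closed_Collect_const)
  moreover have "balanced_sphere \<subseteq> box"
  proof
    fix x assume x: "x \<in> balanced_sphere"
    have "\<bar>x v\<bar> \<le> 1" if "v \<in> V" for v
      using inner_on_self_ge_square[OF finite_V that, of x] x
      by (simp add: balanced_sphere_def power2_eq_square[symmetric] abs_square_le_1)
    then show "x \<in> box"
      using x by (auto simp: box_def balanced_sphere_def balanced_def PiE_def extensional_def abs_le_iff)
  qed
  ultimately show ?thesis
    by (metis compact_Int_closed inf.absorb_iff2)
qed

lemma adj_stretch_attains_max:
  assumes "card V > k"
  obtains x0 where "x0 \<in> balanced_sphere"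
    and "\<And>y. y \<in> balanced_sphere \<Longrightarrow> inner_on V (A y) (A y) \<le> inner_on V (A x0) (A x0)"
proof -
  have coordinate: "continuous_on balanced_sphere (\<lambda>x. if E v u then x u else 0)" for v u
    by (cases "E v u") (auto intro: continuous_on_subset[OF continuous_on_product_coordinates])
  have "continuous_on balanced_sphere (\<lambda>x. inner_on V (A x) (A x))"
    unfolding inner_on_def adj_apply_def by (intro continuous_intros coordinate)
  then show ?thesis
    using continuous_attains_sup[OF compact_balanced_sphere balanced_sphere_nonempty[OF assms]] that
    by blast
qed

context
  fixes x0 :: "'a \<Rightarrow> real"
  assumes x0_in: "x0 \<in> balanced_sphere"
    and x0_max: "\<And>y. y \<in> balanced_sphere \<Longrightarrow> inner_on V (A y) (A y) \<le> inner_on V (A x0) (A x0)"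
begin

lemma adj_stretch_le_max:
  assumes "balanced y"
  shows "inner_on V (A y) (A y) \<le> inner_on V (A x0) (A x0) * inner_on V y y"
proof (cases "\<exists>v\<in>V. y v \<noteq> 0")
  case True
  define r where "r = sqrt (inner_on V y y)"
  have "r > 0"
    using True inner_on_self_eq_0_iff[OF finite_V, of y] inner_on_self_nonneg[of V y]
    by (auto simp: r_def)
  have "A (\<lambda>v. y v / r) = (\<lambda>v. A y v / r)"
    using adj_apply_scale[of "1 / r" y] by auto
  then have "inner_on V (A y) (A y) / r\<^sup>2 \<le> inner_on V (A x0) (A x0)"
    using x0_max[OF normalize_in_balanced_sphere[OF assms True, folded r_def]]
      inner_on_scaleL[of V "1 / r"] inner_on_scaleR[of V _ "1 / r"]
    by (simp add: power2_eq_square)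
  then have "inner_on V (A y) (A y) \<le> inner_on V (A x0) (A x0) * r\<^sup>2"
    using \<open>r > 0\<close> by (simp add: pos_divide_le_eq)
  then show ?thesis
    by (simp add: r_def inner_on_self_nonneg)
next
  case False
  then have "A y = (\<lambda>_. 0)"
    by (auto simp: adj_apply_def fun_eq_iff intro!: sum.neutral)
  then have "inner_on V (A y) (A y) = 0"
    by (simp add: inner_on_def)
  then show ?thesis
    by (simp add: inner_on_self_nonneg)
qed

lemma adj_square_max_eq:
  assumes "v \<in> V"
  shows "A (A x0) v = inner_on V (A x0) (A x0) * x0 v"
proof -
  define m where "m = inner_on V (A x0) (A x0)"
  define z where "z = A (A x0)"
  have "inner_on V x0 x0 = 1" and "balanced x0"
    using x0_in by (auto simp: balanced_sphere_def)
  have "inner_on V x0 z = m"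
    by (simp add: z_def m_def inner_on_adj_apply_commute)
  moreover have "inner_on V z z \<le> m * m"
    using adj_stretch_le_max[OF adj_apply_balanced[OF \<open>balanced x0\<close>]]
    by (simp add: z_def m_def inner_on_adj_apply_commute)
  \<comment> \<open>so the squared norm of m x0 - z is at most m^2 - 2 m^2 + m^2\<close>
  moreover have "inner_on V (\<lambda>u. m * x0 u - z u) (\<lambda>u. m * x0 u - z u)
      = m * m * inner_on V x0 x0 - 2 * m * inner_on V x0 z + inner_on V z z"
    unfolding inner_on_diffL inner_on_diffR inner_on_scaleL inner_on_scaleR
    by (simp add: inner_on_commute[of V z x0] algebra_simps)
  ultimately have "inner_on V (\<lambda>u. m * x0 u - z u) (\<lambda>u. m * x0 u - z u) = 0"
    using \<open>inner_on V x0 x0 = 1\<close> inner_on_self_nonneg[of V "\<lambda>u. m * x0 u - z u"] by simp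
  then show ?thesis
    using assms inner_on_self_eq_0_iff[OF finite_V] by (simp add: m_def z_def)
qed

lemma bulk_eigenvalue_max_stretch:
  "\<exists>\<mu>\<in>bulk_eigenvalues V E k P. \<bar>\<mu>\<bar> = sqrt (inner_on V (A x0) (A x0))"
proof -
  define M where "M = sqrt (inner_on V (A x0) (A x0))"
  have "M \<ge> 0"
    by (simp add: M_def inner_on_self_nonneg)
  have x0: "balanced x0" "\<exists>v\<in>V. x0 v \<noteq> 0"
    using x0_in inner_on_self_eq_0_iff[OF finite_V, of x0] by (auto simp: balanced_sphere_def)
  define y where "y v = A x0 v + M * x0 v" for v
  have "balanced y"
    unfolding y_def by (intro balanced_add balanced_scale adj_apply_balanced x0)
  have "A y v = M * y v" if "v \<in> V" for v
    using adj_square_max_eq[OF that] unfolding y_def adj_apply_add adj_apply_scale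
    by (simp add: M_def inner_on_self_nonneg algebra_simps flip: power2_eq_square)
  show ?thesis
  proof (cases "\<exists>v\<in>V. y v \<noteq> 0")
    case True
    then have "M \<in> bulk_eigenvalues V E k P"
      using \<open>balanced y\<close> \<open>\<And>v. v \<in> V \<Longrightarrow> A y v = M * y v\<close> bulk_eigenvalues_iff by blast
    then show ?thesis
      using \<open>M \<ge> 0\<close> by (intro bexI[where x = M]) (simp_all add: M_def)
  next
    case False
    then have "A x0 v = - M * x0 v" if "v \<in> V" for v
      using that by (auto simp: y_def eq_neg_iff_add_eq_0)
    then have "- M \<in> bulk_eigenvalues V E k P"
      using x0 bulk_eigenvalues_iff by blast
    then show ?thesis
      using \<open>M \<ge> 0\<close> by (intro bexI[where x = "- M"]) (simp_all add: M_def)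
  qed
qed

end

lemma eigenvectors_orthogonal:
  assumes "\<forall>v\<in>V. A x v = \<mu> * x v" and "\<forall>v\<in>V. A y v = \<nu> * y v" and "\<mu> \<noteq> \<nu>"
  shows "inner_on V x y = 0"
proof -
  have "\<mu> * inner_on V x y = inner_on V (A x) y"
    unfolding inner_on_scaleL[symmetric] using assms(1) by (intro inner_on_cong) auto
  also have "\<dots> = inner_on V x (A y)"
    by (simp add: inner_on_adj_apply_commute)
  also have "\<dots> = \<nu> * inner_on V x y"
    unfolding inner_on_scaleR[symmetric] using assms(2) by (intro inner_on_cong) auto
  finally show ?thesis
    using assms(3) by simp
qed

lemma finite_bulk_eigenvalues: "finite (bulk_eigenvalues V E k P)"
proof (rule ccontr)
  assume "infinite (bulk_eigenvalues V E k P)"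
  then obtain J where J: "finite J" "card J = Suc (card V)" "J \<subseteq> bulk_eigenvalues V E k P"
    using infinite_arbitrarily_large by blast
  have "\<exists>x. x \<in> balanced_sphere \<and> (\<forall>v\<in>V. A x v = \<mu> * x v)" if "\<mu> \<in> J" for \<mu>
  proof -
    obtain x where x: "balanced x" "\<exists>v\<in>V. x v \<noteq> 0" "\<forall>v\<in>V. A x v = \<mu> * x v"
      using \<open>\<mu> \<in> J\<close> J(3) bulk_eigenvalues_iff by blast
    have "A (\<lambda>u. x u / sqrt (inner_on V x x)) v = \<mu> * (x v / sqrt (inner_on V x x))" if "v \<in> V" for v
      using adj_apply_scale[of "1 / sqrt (inner_on V x x)" x v] x(3) that by simp
    then show ?thesis
      using normalize_in_balanced_sphere[OF x(1,2)] by blast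
  qed
  then obtain f where f: "\<And>\<mu>. \<mu> \<in> J \<Longrightarrow> f \<mu> \<in> balanced_sphere \<and> (\<forall>v\<in>V. A (f \<mu>) v = \<mu> * f \<mu> v)"
    by metis
  have "inner_on V (f \<mu>) (f \<nu>) = 0" if "\<mu> \<in> J" "\<nu> \<in> J" "\<mu> \<noteq> \<nu>" for \<mu> \<nu>
    using f[OF that(1)] f[OF that(2)] that(3) by (blast intro: eigenvectors_orthogonal)
  then have "card J \<le> card V"
    using f by (intro card_orthonormal_le[OF finite_V J(1)]) (auto simp: balanced_sphere_def)
  then show False
    using J(2) by simp
qed

lemma max_stretch_le_lambda_B:
  assumes "x0 \<in> balanced_sphere"
    and "\<And>y. y \<in> balanced_sphere \<Longrightarrow> inner_on V (A y) (A y) \<le> inner_on V (A x0) (A x0)"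
  shows "sqrt (inner_on V (A x0) (A x0)) \<le> lambda_B V E k P"
  using bulk_eigenvalue_max_stretch[OF assms] finite_bulk_eigenvalues
  unfolding lambda_B_def by (metis Max_ge finite_imageI image_eqI)

lemma lambda_B_nonneg: "card V > k \<Longrightarrow> lambda_B V E k P \<ge> 0"
  by (metis adj_stretch_attains_max max_stretch_le_lambda_B order.trans real_sqrt_ge_zero
      inner_on_self_nonneg)

lemma abs_inner_adj_balanced_le:
  assumes "card V > k" and "balanced y"
  shows "\<bar>inner_on V x (A y)\<bar> \<le> lambda_B V E k P * sqrt (inner_on V x x) * sqrt (inner_on V y y)"
proof -
  obtain x0 where x0: "x0 \<in> balanced_sphere"
    "\<And>y. y \<in> balanced_sphere \<Longrightarrow> inner_on V (A y) (A y) \<le> inner_on V (A x0) (A x0)"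
    using adj_stretch_attains_max[OF assms(1)] by blast
  have "sqrt (inner_on V (A y) (A y)) \<le> sqrt (inner_on V (A x0) (A x0)) * sqrt (inner_on V y y)"
    using adj_stretch_le_max[OF x0 assms(2)] by (simp flip: real_sqrt_mult)
  also have "\<dots> \<le> lambda_B V E k P * sqrt (inner_on V y y)"
    using max_stretch_le_lambda_B[OF x0] by (intro mult_right_mono) (simp_all add: inner_on_self_nonneg)
  finally have "sqrt (inner_on V x x) * sqrt (inner_on V (A y) (A y))
      \<le> sqrt (inner_on V x x) * (lambda_B V E k P * sqrt (inner_on V y y))"
    by (intro mult_left_mono) (simp_all add: inner_on_self_nonneg)
  with inner_on_Cauchy_Schwarz[of V x "A y"] show ?thesis
    by (simp add: mult_ac)
qed

definition cell_projection :: "'a set \<Rightarrow> 'a \<Rightarrow> real" where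
  "cell_projection C v = (\<Sum>i<k. if v \<in> P i then real (card (C \<inter> P i)) / real (card (P i)) else 0)"

definition bulk_part :: "'a set \<Rightarrow> 'a \<Rightarrow> real" where
  "bulk_part C v = indicator C v - cell_projection C v"

lemma cell_projection_on_cell:
  assumes "i < k" and "v \<in> P i"
  shows "cell_projection C v = real (card (C \<inter> P i)) / real (card (P i))"
proof -
  have "cell_projection C v
      = (\<Sum>j<k. if j = i then real (card (C \<inter> P j)) / real (card (P j)) else 0)"
    unfolding cell_projection_def using cells_disjoint assms by (intro sum.cong) auto
  then show ?thesis
    using assms(1) by simp
qed

lemma cell_projection_outside: "v \<notin> V \<Longrightarrow> cell_projection C v = 0"
  unfolding cell_projection_def using cell_subset by (intro sum.neutral) auto

lemma sum_cell_projection: "i < k \<Longrightarrow> sum (cell_projection C) (P i) = real (card (C \<inter> P i))"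
  using card_cell_pos[of i] by (simp add: cell_projection_on_cell)

lemma sum_indicator_cell: "i < k \<Longrightarrow> sum (indicator C) (P i) = real (card (C \<inter> P i))"
  using finite_cell[of i] by (simp add: indicator_def of_bool_def sum.If_cases Int_commute)

lemma balanced_bulk_part:
  assumes "C \<subseteq> V"
  shows "balanced (bulk_part C)"
proof -
  have "bulk_part C v = 0" if "v \<notin> V" for v
    using assms that by (auto simp: bulk_part_def cell_projection_outside split: split_indicator)
  then show ?thesis
    unfolding balanced_def bulk_part_def
    by (simp add: sum_subtractf sum_cell_projection sum_indicator_cell)
qed

lemma inner_cell_projection_balanced:
  assumes "balanced u"
  shows "inner_on V (cell_projection B) u = 0"
proof -
  have "inner_on V (cell_projection B) u = (\<Sum>i<k. \<Sum>v\<in>P i. cell_projection B v * u v)"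
    unfolding inner_on_def by (rule sum_over_cells)
  also have "\<dots> = (\<Sum>i<k. real (card (B \<inter> P i)) / real (card (P i)) * sum u (P i))"
    by (intro sum.cong refl) (simp add: cell_projection_on_cell sum_distrib_left)
  also have "\<dots> = 0"
    using assms by (simp add: balanced_def)
  finally show ?thesis .
qed

lemma indicator_eq_cell_projection_plus_bulk_part:
  "indicator C = (\<lambda>v. cell_projection C v + bulk_part C v)"
  by (simp add: bulk_part_def fun_eq_iff)

lemma inner_bulk_part_le_card:
  assumes "B \<subseteq> V"
  shows "inner_on V (bulk_part B) (bulk_part B) \<le> real (card B)"
proof -
  note split = indicator_eq_cell_projection_plus_bulk_part[of B]
  have orth: "inner_on V (cell_projection B) (bulk_part B) = 0"
    by (rule inner_cell_projection_balanced[OF balanced_bulk_part[OF assms]])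
  have "inner_on V (indicator B) (bulk_part B) = inner_on V (bulk_part B) (bulk_part B)"
    using inner_on_addL[of V "cell_projection B" "bulk_part B" "bulk_part B", folded split] orth
    by simp
  moreover have "inner_on V (indicator B) (cell_projection B)
      = inner_on V (cell_projection B) (cell_projection B)"
    using inner_on_addL[of V "cell_projection B" "bulk_part B" "cell_projection B", folded split]
      orth inner_on_commute[of V "bulk_part B" "cell_projection B"]
    by simp
  moreover have "inner_on V (indicator B) (indicator B)
      = inner_on V (indicator B) (cell_projection B) + inner_on V (indicator B) (bulk_part B)"
    using inner_on_addR[of V "indicator B" "cell_projection B" "bulk_part B", folded split] .
  moreover have "inner_on V (indicator B) (indicator B) = real (card B)"
    using assms finite_V by (simp add: inner_on_indicatorL)
  ultimately show ?thesis
    using inner_on_self_nonneg[of V "cell_projection B"] by linarith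
qed

lemma edges_between_eq_inner_on:
  assumes "B \<subseteq> V" and "C \<subseteq> V"
  shows "real (edges_between E B C) = inner_on V (indicator B) (A (indicator C))"
proof -
  have "finite B" "finite C"
    using assms finite_V finite_subset by auto
  have "{(u, v). u \<in> B \<and> v \<in> C \<and> E u v} = (SIGMA u:B. {v \<in> C. E u v})"
    by auto
  then have "edges_between E B C = (\<Sum>u\<in>B. card {v \<in> C. E u v})"
    unfolding edges_between_def using \<open>finite B\<close> \<open>finite C\<close> by simp
  then show ?thesis
    using assms finite_V by (simp add: inner_on_indicatorL adj_apply_indicator)
qed

lemma card_cell_mult_degree:
  assumes "i < k" and "j < k"
  shows "card (P i) * s i j = card (P j) * s j i"
proof -
  have "real (card (P i) * s i j) = inner_on V (indicator (P i)) (A (indicator (P j)))"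
    using assms cell_subset finite_V card_neighbours_in_cell
    by (simp add: inner_on_indicatorL adj_apply_indicator)
  also have "\<dots> = inner_on V (indicator (P j)) (A (indicator (P i)))"
    by (metis inner_on_adj_apply_commute inner_on_commute)
  also have "\<dots> = real (card (P j) * s j i)"
    using assms cell_subset finite_V card_neighbours_in_cell
    by (simp add: inner_on_indicatorL adj_apply_indicator)
  finally show ?thesis
    by (simp only: of_nat_eq_iff)
qed

lemma sqrt_cell_coefficient:
  assumes "i < k" and "j < k"
  shows "sqrt (real (s i j * s j i) / (real (card (P i)) * real (card (P j))))
    = real (s i j) / real (card (P j))"
proof -
  have "real (card (P i)) * real (s i j) = real (card (P j)) * real (s j i)"
    using card_cell_mult_degree[OF assms] by (simp flip: of_nat_mult)
  then have "real (s i j * s j i) / (real (card (P i)) * real (card (P j)))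
      = (real (s i j) / real (card (P j)))\<^sup>2"
    using card_cell_pos[OF assms(1)] card_cell_pos[OF assms(2)]
    by (simp add: field_simps power2_eq_square)
  then show ?thesis
    by simp
qed

lemma adj_apply_cell_projection:
  assumes "i < k" and "v \<in> P i"
  shows "A (cell_projection C) v = (\<Sum>j<k. real (s i j) * (real (card (C \<inter> P j)) / real (card (P j))))"
proof -
  have "A (cell_projection C) v = (\<Sum>j<k. \<Sum>u\<in>P j. if E v u then cell_projection C u else 0)"
    unfolding adj_apply_def by (rule sum_over_cells)
  also have "\<dots> = (\<Sum>j<k. \<Sum>u\<in>P j. if E v u then real (card (C \<inter> P j)) / real (card (P j)) else 0)"
    by (intro sum.cong refl) (simp add: cell_projection_on_cell)
  also have "\<dots> = (\<Sum>j<k. real (s i j) * (real (card (C \<inter> P j)) / real (card (P j))))"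
    using assms by (intro sum.cong refl) (simp add: sum_if_edge finite_cell card_neighbours_in_cell)
  finally show ?thesis .
qed

lemma inner_indicator_adj_cell_projection:
  assumes "B \<subseteq> V"
  shows "inner_on V (indicator B) (A (cell_projection C))
    = (\<Sum>i<k. \<Sum>j<k. sqrt (real (s i j * s j i) / (real (card (P i)) * real (card (P j))))
        * real (card (B \<inter> P i)) * real (card (C \<inter> P j)))"
proof -
  have "inner_on V (indicator B) (A (cell_projection C)) = (\<Sum>i<k. \<Sum>v\<in>P i. indicator B v * A (cell_projection C) v)"
    unfolding inner_on_def by (rule sum_over_cells)
  also have "\<dots> = (\<Sum>i<k. real (card (B \<inter> P i))
      * (\<Sum>j<k. real (s i j) * (real (card (C \<inter> P j)) / real (card (P j)))))"
    by (intro sum.cong refl)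
      (simp add: adj_apply_cell_projection sum_indicator_cell flip: sum_distrib_right)
  also have "\<dots> = (\<Sum>i<k. \<Sum>j<k. sqrt (real (s i j * s j i) / (real (card (P i)) * real (card (P j))))
        * real (card (B \<inter> P i)) * real (card (C \<inter> P j)))"
    unfolding sum_distrib_left
    by (intro sum.cong refl) (simp only: lessThan_iff sqrt_cell_coefficient, simp add: mult_ac)
  finally show ?thesis .
qed

lemma edges_between_minus_cell_sum:
  assumes "B \<subseteq> V" and "C \<subseteq> V"
  shows "real (edges_between E B C)
      - (\<Sum>i<k. \<Sum>j<k. sqrt (real (s i j * s j i) / (real (card (P i)) * real (card (P j))))
          * real (card (B \<inter> P i)) * real (card (C \<inter> P j)))
    = inner_on V (bulk_part B) (A (bulk_part C))"
proof -
  note split = indicator_eq_cell_projection_plus_bulk_part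
  have "inner_on V (cell_projection B) (A (bulk_part C)) = 0"
    by (intro inner_cell_projection_balanced adj_apply_balanced balanced_bulk_part assms(2))
  then have "inner_on V (indicator B) (A (bulk_part C)) = inner_on V (bulk_part B) (A (bulk_part C))"
    by (subst split) (simp add: inner_on_addL)
  moreover have "inner_on V (indicator B) (A (indicator C))
      = inner_on V (indicator B) (A (cell_projection C)) + inner_on V (indicator B) (A (bulk_part C))"
  proof -
    have "A (indicator C) = (\<lambda>v. A (cell_projection C) v + A (bulk_part C) v)"
      by (subst split) (simp add: adj_apply_add fun_eq_iff)
    then show ?thesis
      by (simp add: inner_on_addR)
  qed
  ultimately show ?thesis
    using assms by (simp add: edges_between_eq_inner_on inner_indicator_adj_cell_projection)
qed

end

theorem mainTheorem10:
  fixes V :: "'a set" and E :: "'a \<Rightarrow> 'a \<Rightarrow> bool" and k :: nat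
    and P :: "nat \<Rightarrow> 'a set" and s :: "nat \<Rightarrow> nat \<Rightarrow> nat" and B C :: "'a set"
  assumes "simple_graph V E" and "connected_graph V E"
    and "S_regular V E k P s"
    and "card V > k"
    and "B \<subseteq> V" and "C \<subseteq> V"
  shows "\<bar>real (edges_between E B C)
           - (\<Sum>i<k. \<Sum>j<k. sqrt (real (s i j * s j i) / (real (card (P i)) * real (card (P j))))
                 * real (card (B \<inter> P i)) * real (card (C \<inter> P j)))\<bar>
         \<le> lambda_B V E k P * sqrt (real (card B) * real (card C))"
proof -
  interpret S_regular_graph V E k P s
    using assms(1,3) by unfold_locales
  have "\<bar>real (edges_between E B C)
           - (\<Sum>i<k. \<Sum>j<k. sqrt (real (s i j * s j i) / (real (card (P i)) * real (card (P j))))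
                 * real (card (B \<inter> P i)) * real (card (C \<inter> P j)))\<bar>
      = \<bar>inner_on V (bulk_part B) (A (bulk_part C))\<bar>"
    using edges_between_minus_cell_sum[OF assms(5,6)] by simp
  also have "\<dots> \<le> lambda_B V E k P * sqrt (inner_on V (bulk_part B) (bulk_part B))
      * sqrt (inner_on V (bulk_part C) (bulk_part C))"
    by (rule abs_inner_adj_balanced_le[OF assms(4) balanced_bulk_part[OF assms(6)]])
  also have "\<dots> \<le> lambda_B V E k P * sqrt (real (card B)) * sqrt (real (card C))"
    using lambda_B_nonneg[OF assms(4)] inner_bulk_part_le_card[OF assms(5)]
      inner_bulk_part_le_card[OF assms(6)]
    by (intro mult_mono) (simp_all add: inner_on_self_nonneg)
  finally show ?thesis
    by (simp add: real_sqrt_mult mult.assoc)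
qed

end
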